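(* Let $S,B\subseteq\{-1,1,*\}^X$ be binary hypothesis classes. For any $\varepsilon\ge0$ and $n\in\mathbb{Z}_{>0}$, $\mathsf{AgnOL}_n(\mathbf{A}_{S,B},\varepsilon)\subseteq\mathsf{CompOL}_n(S,B,\varepsilon)$; that is, any online learner solving agnostic online learning for $\mathbf{A}_{S,B}$ also solves comparative online learning for $(S,B)$ with the same $\varepsilon$.
   Context: Agreement hypotheses: for $s,b:X\to\{-1,1,*\}$, $\mathbf{a}_{s,b}(x)=s(x)$ if $s(x)=b(x)\in\{-1,1\}$, and $\mathbf{a}_{s,b}(x)=*$ otherwise; $\mathbf{A}_{S,B}=\{\mathbf{a}_{s,b}:s\in S,b\in B\}$. An online learner, for each $i=1,\dots,n$, given $(x_1,y_1),\dots,(x_{i-1},y_{i-1})$ and $x_i$, outputs a possibly random $\hat y_i\in\{-1,1\}$; $\mathsf{mistake}(L;(x_i,y_i)_{i=1}^n)=\frac1n\sum_i\Pr[\hat y_i\ne y_i]$ and $\mathsf{mistake}(h;(x_i,y_i)_{i=1}^n)=\frac1n\sum_i\mathbf{1}(h(x_i)\neq y_i)$. $\mathsf{AgnOL}_n(H,\varepsilon)$: online learners with $\mathsf{mistake}(L;\cdot)\le\inf_{h\in H}\mathsf{mistake}(h;\cdot)+\varepsilon$ on every sequence of $n$ points of $X\times\{-1,1\}$. $\mathsf{CompOL}_n(S,B,\varepsilon)$: online learners with $\mathsf{mistake}(L;\cdot)\le\inf_{b\in B}\mathsf{mistake}(b;\cdot)+\varepsilon$ on every sequence satisfying $y_i=s(x_i)$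 for all $i$ for some $s\in S$. *)

theory Defs
  imports "HOL-Probability.Probability_Mass_Function"
begin

text \<open>Binary labels {-1,1}; a partial label in {-1,1,*} is a value of type pm option,
  with None standing for *.\<close>
datatype pm = Neg | Pos

type_synonym 'x hyp = "'x \<Rightarrow> pm option"

definition agree :: "'x hyp \<Rightarrow> 'x hyp \<Rightarrow> 'x hyp" where
  "agree s b = (\<lambda>x. if s x = b x \<and> s x \<noteq> None then s x else None)"

definition agreeClass :: "'x hyp set \<Rightarrow> 'x hyp set \<Rightarrow> 'x hyp set" where
  "agreeClass S B = {agree s b | s b. s \<in> S \<and> b \<in> B}"

type_synonym 'x learner = "('x \<times> pm) list \<Rightarrow> 'x \<Rightarrow> pm pmf"

definition mistakeL :: "'x learner \<Rightarrow> ('x \<times> pm) list \<Rightarrow> real" where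
  "mistakeL L zs = (1 / real (length zs)) *
     (\<Sum>i<length zs. measure_pmf.prob (L (take i zs) (fst (zs ! i))) {y. y \<noteq> snd (zs ! i)})"

definition mistakeH :: "'x hyp \<Rightarrow> ('x \<times> pm) list \<Rightarrow> real" where
  "mistakeH h zs = (1 / real (length zs)) *
     (\<Sum>i<length zs. if h (fst (zs ! i)) \<noteq> Some (snd (zs ! i)) then 1 else 0)"

definition AgnOL :: "nat \<Rightarrow> 'x hyp set \<Rightarrow> real \<Rightarrow> 'x learner set" where
  "AgnOL n H \<epsilon> = {L. \<forall>zs. length zs = n \<longrightarrow>
      mistakeL L zs \<le> (INF h\<in>H. mistakeH h zs) + \<epsilon>}"

definition CompOL :: "nat \<Rightarrow> 'x hyp set \<Rightarrow> 'x hyp set \<Rightarrow> real \<Rightarrow> 'x learner set" where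
  "CompOL n S B \<epsilon> = {L. \<forall>zs. length zs = n \<longrightarrow>
      (\<exists>s\<in>S. \<forall>i<length zs. s (fst (zs ! i)) = Some (snd (zs ! i))) \<longrightarrow>
      mistakeL L zs \<le> (INF b\<in>B. mistakeH b zs) + \<epsilon>}"

end

theory Submission
  imports Defs
begin

text \<open>On a sequence labelled by \<open>s\<close>, the agreement hypothesis \<open>agree s b\<close> errs exactly where \<open>b\<close>
  does. Hence every loss of a comparator \<open>b \<in> B\<close> is attained by a member of \<open>agreeClass S B\<close>,
  so the agnostic benchmark is at most the comparative one and the agnostic guarantee
  transfers verbatim.\<close>

lemma mistakeH_agree:
  assumes "\<forall>i<length zs. s (fst (zs ! i)) = Some (snd (zs ! i))"
  shows "mistakeH (agree s b) zs = mistakeH b zs"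
proof -
  have "(\<Sum>i<length zs. if agree s b (fst (zs ! i)) \<noteq> Some (snd (zs ! i)) then 1 else (0::real)) =
        (\<Sum>i<length zs. if b (fst (zs ! i)) \<noteq> Some (snd (zs ! i)) then 1 else 0)"
    by (rule sum.cong) (use assms in \<open>auto simp: agree_def\<close>)
  then show ?thesis unfolding mistakeH_def by simp
qed

lemma mistakeH_nonneg: "mistakeH h zs \<ge> 0"
  unfolding mistakeH_def by (intro mult_nonneg_nonneg sum_nonneg) auto

lemma mistakeH_image_subset_agreeClass:
  assumes "s \<in> S" and "\<forall>i<length zs. s (fst (zs ! i)) = Some (snd (zs ! i))"
  shows "(\<lambda>b. mistakeH b zs) ` B \<subseteq> (\<lambda>h. mistakeH h zs) ` agreeClass S B"
proof
  fix v assume "v \<in> (\<lambda>b. mistakeH b zs) ` B"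
  then obtain b where "b \<in> B" and v: "v = mistakeH b zs" by blast
  then have "agree s b \<in> agreeClass S B" using assms(1) unfolding agreeClass_def by blast
  moreover have "v = mistakeH (agree s b) zs" using mistakeH_agree[OF assms(2)] v by simp
  ultimately show "v \<in> (\<lambda>h. mistakeH h zs) ` agreeClass S B" by blast
qed

lemma INF_agreeClass_mistakeH_le:
  assumes "s \<in> S" and "\<forall>i<length zs. s (fst (zs ! i)) = Some (snd (zs ! i))"
  shows "(INF h\<in>agreeClass S B. mistakeH h zs) \<le> (INF b\<in>B. mistakeH b zs)"
proof (cases "B = {}")
  case True
  \<comment> \<open>both sides are then the junk value \<open>Inf {}\<close>\<close>
  then have "agreeClass S B = {}" unfolding agreeClass_def by auto
  with True show ?thesis by simp
next
  case False
  have "bdd_below ((\<lambda>h. mistakeH h zs) ` agreeClass S B)"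
    by (rule bdd_belowI[where m = 0]) (auto intro: mistakeH_nonneg)
  with False show ?thesis
    using cInf_superset_mono[OF _ _ mistakeH_image_subset_agreeClass[OF assms]] by simp
qed

theorem lemma8p8:
  fixes S B :: "'x hyp set" and \<epsilon> :: real and n :: nat
  assumes "\<epsilon> \<ge> 0" and "n > 0"
  shows "AgnOL n (agreeClass S B) \<epsilon> \<subseteq> CompOL n S B \<epsilon>"
proof
  fix L assume L: "L \<in> AgnOL n (agreeClass S B) \<epsilon>"
  show "L \<in> CompOL n S B \<epsilon>"
    unfolding CompOL_def
  proof (intro CollectI allI impI)
    fix zs :: "('x \<times> pm) list"
    assume "length zs = n" and "\<exists>s\<in>S. \<forall>i<length zs. s (fst (zs ! i)) = Some (snd (zs ! i))"
    then obtain s where "s \<in> S" and "\<forall>i<length zs. s (fst (zs ! i)) = Some (snd (zs ! i))"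
      by blast
    then have "(INF h\<in>agreeClass S B. mistakeH h zs) \<le> (INF b\<in>B. mistakeH b zs)"
      by (rule INF_agreeClass_mistakeH_le)
    moreover have "mistakeL L zs \<le> (INF h\<in>agreeClass S B. mistakeH h zs) + \<epsilon>"
      using L \<open>length zs = n\<close> unfolding AgnOL_def by blast
    ultimately show "mistakeL L zs \<le> (INF b\<in>B. mistakeH b zs) + \<epsilon>" by linarith
  qed
qed

end
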